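(* Let $A,B,C\in\mathrm{End}(V)$. Then $A,B,C$ is an LR triple on $V$ if and only if: (i) each of $A,B,C$ is Nil; (ii) the flag $(A^{d-i}V)_{i=0}^d$ is raised by $B$ and by $C$; (iii) the flag $(B^{d-i}V)_{i=0}^d$ is raised by $C$ and by $A$; (iv) the flag $(C^{d-i}V)_{i=0}^d$ is raised by $A$ and by $B$.
   Context: Let $V$ be a vector space over a field $\mathbb F$ with $\dim V=d+1$. $X\in\mathrm{End}(V)$ is Nil if $X^{d+1}=0$ and $X^d\ne0$ (then $(X^{d-i}V)_{i=0}^d$ is a flag). A flag on $V$ is a sequence $(U_i)_{i=0}^d$ of subspaces with $\dim U_i=i+1$ and $U_{i-1}\subseteq U_i$. $X$ raises the flag if $U_i+XU_i=U_{i+1}$ for $0\le i\le d-1$. A decomposition of $V$ is a sequence $(V_i)_{i=0}^d$ of one-dimensional subspaces with $V=\bigoplus V_i$; $X$ lowers it if $XV_i=V_{i-1}$ ($1\le i\le d$), $XV_0=0$; raises it if $XV_i=V_{i+1}$ ($0\le i\le d-1$), $XV_d=0$. An ordered pair $X,Y$ is an LR pair if some decomposition is lowered by $X$ and raised by $Y$. An LR triple on $V$ is $A,B,C$ such that every ordered pair of distinct elements among $A,B,C$ is an LR pair on $V$. *)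

theory Defs
  imports "HOL.Vector_Spaces"
begin

text \<open>V is the whole carrier type 'v, a vector space over the field 'f via scale.
  Endomorphisms of V are the linear maps 'v => 'v.\<close>

definition is_Nil :: "nat \<Rightarrow> ('v::ab_group_add \<Rightarrow> 'v) \<Rightarrow> bool" where
  "is_Nil d X \<longleftrightarrow> X ^^ (d+1) = (\<lambda>_. 0) \<and> X ^^ d \<noteq> (\<lambda>_. 0)"

definition is_flag :: "('f::field \<Rightarrow> 'v::ab_group_add \<Rightarrow> 'v) \<Rightarrow> nat \<Rightarrow> (nat \<Rightarrow> 'v set) \<Rightarrow> bool" where
  "is_flag scale d U \<longleftrightarrow>
     (\<forall>i\<le>d. module.subspace scale (U i) \<and> vector_space.dim scale (U i) = i + 1) \<and>
     (\<forall>i. 1 \<le> i \<and> i \<le> d \<longrightarrow> U (i - 1) \<subseteq> U i)"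

definition subspace_sum :: "'v::ab_group_add set \<Rightarrow> 'v set \<Rightarrow> 'v set" where
  "subspace_sum U W = {u + w | u w. u \<in> U \<and> w \<in> W}"

definition raises_flag :: "nat \<Rightarrow> ('v::ab_group_add \<Rightarrow> 'v) \<Rightarrow> (nat \<Rightarrow> 'v set) \<Rightarrow> bool" where
  "raises_flag d X U \<longleftrightarrow> (\<forall>i<d. subspace_sum (U i) (X ` U i) = U (i + 1))"

definition flag_of :: "nat \<Rightarrow> ('v \<Rightarrow> 'v) \<Rightarrow> nat \<Rightarrow> 'v set" where
  "flag_of d X = (\<lambda>i. range (X ^^ (d - i)))"

definition is_decomposition :: "('f::field \<Rightarrow> 'v::ab_group_add \<Rightarrow> 'v) \<Rightarrow> nat \<Rightarrow> (nat \<Rightarrow> 'v set) \<Rightarrow> bool" where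
  "is_decomposition scale d W \<longleftrightarrow>
     (\<forall>i\<le>d. module.subspace scale (W i) \<and> vector_space.dim scale (W i) = 1) \<and>
     module.span scale (\<Union>i\<le>d. W i) = UNIV \<and>
     (\<forall>i\<le>d. W i \<inter> module.span scale (\<Union>j\<in>{..d} - {i}. W j) = {0})"

definition lowers_dec :: "nat \<Rightarrow> ('v::ab_group_add \<Rightarrow> 'v) \<Rightarrow> (nat \<Rightarrow> 'v set) \<Rightarrow> bool" where
  "lowers_dec d X W \<longleftrightarrow> (\<forall>i. 1 \<le> i \<and> i \<le> d \<longrightarrow> X ` W i = W (i - 1)) \<and> X ` W 0 = {0}"

definition raises_dec :: "nat \<Rightarrow> ('v::ab_group_add \<Rightarrow> 'v) \<Rightarrow> (nat \<Rightarrow> 'v set) \<Rightarrow> bool" where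
  "raises_dec d X W \<longleftrightarrow> (\<forall>i<d. X ` W i = W (i + 1)) \<and> X ` W d = {0}"

definition LR_pair :: "('f::field \<Rightarrow> 'v::ab_group_add \<Rightarrow> 'v) \<Rightarrow> nat \<Rightarrow> ('v \<Rightarrow> 'v) \<Rightarrow> ('v \<Rightarrow> 'v) \<Rightarrow> bool" where
  "LR_pair scale d X Y \<longleftrightarrow> (\<exists>W. is_decomposition scale d W \<and> lowers_dec d X W \<and> raises_dec d Y W)"

definition LR_triple :: "('f::field \<Rightarrow> 'v::ab_group_add \<Rightarrow> 'v) \<Rightarrow> nat \<Rightarrow> ('v \<Rightarrow> 'v) \<Rightarrow> ('v \<Rightarrow> 'v) \<Rightarrow> ('v \<Rightarrow> 'v) \<Rightarrow> bool" where
  "LR_triple scale d A B C \<longleftrightarrow>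
     LR_pair scale d A B \<and> LR_pair scale d B A \<and>
     LR_pair scale d B C \<and> LR_pair scale d C B \<and>
     LR_pair scale d A C \<and> LR_pair scale d C A"

end

theory Submission imports Defs begin

text \<open>Given an LR pair \<open>X, Y\<close> with decomposition \<open>V_0, ..., V_d\<close>, choose \<open>w_0\<close> spanning
  \<open>V_0\<close> and put \<open>w_i = Y^i w_0\<close>: this is a basis which \<open>Y\<close> shifts up and \<open>X\<close> shifts down up
  to nonzero scalars. In such a basis \<open>X^(d-i) V = \<langle>w_0, ..., w_i\<rangle>\<close> and
  \<open>Y^(d-i) V = \<langle>w_(d-i), ..., w_d\<rangle>\<close>, so both maps are Nil and each raises the flag of the
  other. Conversely, if \<open>X, Y\<close> are Nil and raise each other's flags, then \<open>X^d V\<close> is a line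
  \<open>\<langle>w_0\<rangle>\<close>, and since \<open>Y\<close> raises the flag of \<open>X\<close>, \<open>X^(d-i) V = \<langle>w_0, ..., w_i\<rangle>\<close> with
  \<open>w_i = Y^i w_0\<close>, which is a basis by counting dimensions. Now \<open>X w_j\<close> lies in
  \<open>X^(d-j+1) V = \<langle>w_0, ..., w_(j-1)\<rangle>\<close> and, as \<open>X\<close> raises the flag of \<open>Y\<close>, in
  \<open>Y^(j-1) V = \<langle>w_(j-1), ..., w_d\<rangle>\<close>, hence in \<open>\<langle>w_(j-1)\<rangle>\<close>; it is nonzero, for otherwise \<open>X\<close>
  would not enlarge \<open>\<langle>w_j, ..., w_d\<rangle>\<close>. So a pair is LR iff both maps are Nil and each raises
  the other's flag, and an LR triple consists of six LR pairs.\<close>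

lemma raises_flag_cong:
  "(\<And>i. i \<le> d \<Longrightarrow> U i = U' i) \<Longrightarrow> raises_flag d X U \<longleftrightarrow> raises_flag d X U'"
  by (simp add: raises_flag_def)

context vector_space begin

lemma linear_endo_image_span:
  "Vector_Spaces.linear scale scale f \<Longrightarrow> f ` span S = span (f ` S)"
  by (metis linear_iff_module_hom module_hom.span_image)

lemma linear_endo_0: "Vector_Spaces.linear scale scale f \<Longrightarrow> f 0 = 0"
  by (metis linear_iff_module_hom module_hom.zero)

lemma linear_endo_scale: "Vector_Spaces.linear scale scale f \<Longrightarrow> f (a *s x) = a *s f x"
  by (metis linear_iff_module_hom module_hom.scale)

lemma linear_endo_funpow:
  "Vector_Spaces.linear scale scale f \<Longrightarrow> Vector_Spaces.linear scale scale (f ^^ n)"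
proof (induction n)
  case 0 then show ?case using linear_id by (simp add: id_def)
next
  case (Suc n) then show ?case
    by (simp only: funpow.simps(2)) (rule Vector_Spaces.linear_compose[OF Suc.IH Suc.prems])
qed

lemma linear_endo_eq_0_on_spanning:
  "Vector_Spaces.linear scale scale f \<Longrightarrow> span S = UNIV \<Longrightarrow> (\<And>x. x \<in> S \<Longrightarrow> f x = 0) \<Longrightarrow> f = (\<lambda>_. 0)"
  by (metis (no_types, lifting) ext UNIV_I linear_iff_module_hom module_hom.eq_0_on_span)

lemma subspace_range_linear_endo: "Vector_Spaces.linear scale scale f \<Longrightarrow> subspace (range f)"
  by (metis linear_endo_image_span span_UNIV subspace_span)

lemma subspace_sum_span_image:
  "Vector_Spaces.linear scale scale f \<Longrightarrow> subspace_sum (span A) (f ` span A) = span (A \<union> f ` A)"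
  by (simp add: subspace_sum_def span_Un linear_endo_image_span)

lemma span_singleton_eq_imp_scale:
  assumes "span {x} = span {y}" and "y \<noteq> 0"
  shows "\<exists>a. a \<noteq> 0 \<and> x = a *s y"
proof -
  obtain a where a: "x = a *s y" using assms(1) span_base[of x "{x}"] by (auto simp: span_singleton)
  have "a \<noteq> 0"
  proof
    assume "a = 0"
    then have "span {y} = {0}" using a assms(1) by simp
    then show False using assms(2) span_base[of y "{y}"] by auto
  qed
  with a show ?thesis by blast
qed

lemma dim_one_subspace_eq_span_singleton:
  assumes "subspace S" and "dim S = 1"
  shows "\<exists>b. b \<noteq> 0 \<and> S = span {b}"
proof -
  obtain B where B: "B \<subseteq> S" "independent B" "S \<subseteq> span B" "card B = dim S"
    using basis_exists by blast
  then obtain b where "B = {b}" using assms(2) by (auto simp: card_1_singleton_iff)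
  then show ?thesis using B span_subspace[OF B(1) B(3) assms(1)] by auto
qed

lemma span_UN_span_singleton: "span (\<Union>j\<in>I. span {f j}) = span (f ` I)"
proof (rule span_eq[THEN iffD2], intro conjI subsetI)
  fix x assume "x \<in> (\<Union>j\<in>I. span {f j})"
  then obtain j where "j \<in> I" "x \<in> span {f j}" by auto
  moreover have "span {f j} \<subseteq> span (f ` I)" using \<open>j \<in> I\<close> by (intro span_mono) auto
  ultimately show "x \<in> span (f ` I)" by auto
qed (auto intro: span_base)

lemma span_Int_independent:
  assumes B: "independent B" and "A1 \<subseteq> B" and "A2 \<subseteq> B"
    and "x \<in> span A1" and "x \<in> span A2"
  shows "x \<in> span (A1 \<inter> A2)"
proof -
  have r1: "representation B x = representation A1 x" by (rule representation_extend) fact+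
  have r2: "representation B x = representation A2 x" by (rule representation_extend) fact+
  have "x \<in> span B" using span_mono[OF \<open>A1 \<subseteq> B\<close>] \<open>x \<in> span A1\<close> by auto
  then have "x = (\<Sum>b | representation B x b \<noteq> 0. representation B x b *s b)"
    using sum_nonzero_representation_eq[OF B] by simp
  also have "\<dots> \<in> span (A1 \<inter> A2)"
  proof (rule span_sum)
    fix b assume "b \<in> {b. representation B x b \<noteq> 0}"
    then have "representation A1 x b \<noteq> 0" "representation A2 x b \<noteq> 0" using r1 r2 by auto
    then have "b \<in> A1" "b \<in> A2" by (simp_all add: representation_ne_zero)
    then show "representation B x b *s b \<in> span (A1 \<inter> A2)"
      by (intro span_scale span_base) simp
  qed
  finally show ?thesis .
qed

lemma raised_flag_eq_span_iterates:
  assumes "Vector_Spaces.linear scale scale Y" and "raises_flag d Y U" and "U 0 = span {u}"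
    and "i \<le> d"
  shows "U i = span ((\<lambda>j. (Y ^^ j) u) ` {..i})"
  using \<open>i \<le> d\<close>
proof (induction i)
  case 0 then show ?case using assms(3) by simp
next
  case (Suc i)
  let ?w = "\<lambda>j. (Y ^^ j) u"
  have "U (Suc i) = subspace_sum (U i) (Y ` U i)"
    using assms(2) Suc.prems unfolding raises_flag_def by simp
  also have "\<dots> = span (?w ` {..i} \<union> Y ` ?w ` {..i})"
    using Suc by (simp add: subspace_sum_span_image[OF assms(1)])
  also have "?w ` {..i} \<union> Y ` ?w ` {..i} = ?w ` {..Suc i}"
  proof -
    have "Y ` ?w ` {..i} = ?w ` Suc ` {..i}" by (simp add: image_image)
    moreover have "{..i} \<union> Suc ` {..i} = {..Suc i}" by (auto simp: atMost_Suc)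
    ultimately show ?thesis by (metis image_Un)
  qed
  finally show ?case .
qed

lemma raised_decomposition_eq_span_iterates:
  assumes "Vector_Spaces.linear scale scale Y" and "raises_dec d Y W" and "W 0 = span {b}"
    and "i \<le> d"
  shows "W i = span {(Y ^^ i) b}"
  using \<open>i \<le> d\<close>
proof (induction i)
  case 0 show ?case using assms(3) by simp
next
  case (Suc i)
  have "W (Suc i) = Y ` W i" using assms(2) Suc.prems unfolding raises_dec_def by simp
  also have "\<dots> = span {(Y ^^ Suc i) b}"
    using Suc by (simp add: linear_endo_image_span[OF assms(1)])
  finally show ?case .
qed

end

context finite_dimensional_vector_space begin

lemma spanning_family_inj_independent:
  assumes "span (w ` {..d}) = UNIV" and "dim (UNIV :: 'b set) = d + 1"
  shows "inj_on w {..d}" and "independent (w ` {..d})"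
proof -
  have "dim (UNIV :: 'b set) \<le> card (w ` {..d})" using assms(1) by (intro dim_le_card) auto
  moreover have "card (w ` {..d}) \<le> card {..d}" by (rule card_image_le) simp
  ultimately have card: "card (w ` {..d}) = card {..d}" using assms(2) by simp
  then show "inj_on w {..d}" by (intro eq_card_imp_inj_on) auto
  show "independent (w ` {..d})"
    by (rule card_le_dim_spanning[of _ UNIV]) (use card assms in auto)
qed

lemma range_funpow_psubset:
  assumes "Vector_Spaces.linear scale scale X" and "is_Nil d X" and "k \<le> d"
  shows "range (X ^^ Suc k) \<subset> range (X ^^ k)"
proof
  show "range (X ^^ Suc k) \<subseteq> range (X ^^ k)"
    by (metis funpow_Suc_right comp_apply image_subsetI rangeI)
  show "range (X ^^ Suc k) \<noteq> range (X ^^ k)"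
  proof
    assume stable: "range (X ^^ Suc k) = range (X ^^ k)"
    have "range (X ^^ (k + m)) = range (X ^^ k)" for m
    proof (induction m)
      case (Suc m)
      have "range (X ^^ (k + Suc m)) = X ` range (X ^^ (k + m))"
        by (simp add: image_comp)
      also have "\<dots> = range (X ^^ Suc k)" using Suc by (simp add: image_comp)
      finally show ?case using stable by simp
    qed simp
    from this[of "d + 1 - k"] have "range (X ^^ k) = range (X ^^ (d + 1))"
      using assms(3) by simp
    also have "\<dots> = {0}" using assms(2) by (simp add: is_Nil_def)
    finally have "range (X ^^ k) = {0}" .
    then have "(X ^^ k) y = 0" for y by auto
    then have "(X ^^ d) y = (X ^^ (d - k)) 0" for y
      using assms(3) funpow_add[of "d - k" k X] by simp
    then have "X ^^ d = (\<lambda>_. 0)"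
      using linear_endo_0[OF linear_endo_funpow[OF assms(1)]] by auto
    then show False using assms(2) by (simp add: is_Nil_def)
  qed
qed

lemma dim_range_funpow_le:
  assumes "Vector_Spaces.linear scale scale X" and "is_Nil d X"
    and "dim (UNIV :: 'b set) = d + 1" and "j \<le> d"
  shows "dim (range (X ^^ j)) + j \<le> d + 1"
  using \<open>j \<le> d\<close>
proof (induction j)
  case 0 then show ?case using assms(3) by simp
next
  case (Suc j)
  have "dim (range (X ^^ Suc j)) < dim (range (X ^^ j))"
    using range_funpow_psubset[OF assms(1,2), of j] Suc.prems
      subspace_range_linear_endo[OF linear_endo_funpow[OF assms(1)]]
    by (metis Suc_leD dim_psubset span_eq_iff)
  then show ?case using Suc by simp
qed

lemma Nil_range_top_eq_span_singleton:
  assumes "Vector_Spaces.linear scale scale X" and "is_Nil d X"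
    and "dim (UNIV :: 'b set) = d + 1"
  obtains u where "u \<noteq> 0" and "range (X ^^ d) = span {u}"
proof -
  obtain v where v: "(X ^^ d) v \<noteq> 0" using assms(2) by (auto simp: is_Nil_def)
  have sub: "subspace (range (X ^^ d))"
    by (rule subspace_range_linear_endo[OF linear_endo_funpow[OF assms(1)]])
  have le: "span {(X ^^ d) v} \<subseteq> range (X ^^ d)" by (rule span_minimal) (auto simp: sub)
  have "dim (range (X ^^ d)) \<le> dim (span {(X ^^ d) v})"
    using dim_range_funpow_le[OF assms, of d] v by simp
  then have "span {(X ^^ d) v} = range (X ^^ d)"
    by (intro subspace_dim_equal le sub subspace_span)
  with v that show ?thesis by simp
qed

end

locale raising_basis = finite_dimensional_vector_space +
  fixes d :: nat and Y :: "'b \<Rightarrow> 'b" and w :: "nat \<Rightarrow> 'b"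
  assumes linear_Y: "Vector_Spaces.linear scale scale Y"
    and dim_UNIV: "dim (UNIV :: 'b set) = d + 1"
    and span_w: "span (w ` {..d}) = UNIV"
    and Y_w: "i < d \<Longrightarrow> Y (w i) = w (Suc i)"
    and Y_w_top: "Y (w d) = 0"
begin

lemma inj_on_w: "inj_on w {..d}"
  and independent_w: "independent (w ` {..d})"
  using spanning_family_inj_independent[OF span_w dim_UNIV] by auto

lemma w_notin_span:
  assumes "i \<le> d" and "I \<subseteq> {..d}" and "i \<notin> I"
  shows "w i \<notin> span (w ` I)"
proof
  assume "w i \<in> span (w ` I)"
  moreover have "w ` I \<subseteq> w ` {..d} - {w i}"
    using assms inj_on_w by (auto dest: inj_onD)
  ultimately have "w i \<in> span (w ` {..d} - {w i})" using span_mono by blast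
  then show False using independent_w assms(1) unfolding dependent_def by auto
qed

lemma w_nonzero: "i \<le> d \<Longrightarrow> w i \<noteq> 0"
  using w_notin_span[of i "{}"] by (auto simp: span_empty)

lemma span_w_Int:
  assumes "I \<subseteq> {..d}" and "J \<subseteq> {..d}" and "x \<in> span (w ` I)" and "x \<in> span (w ` J)"
  shows "x \<in> span (w ` (I \<inter> J))"
proof -
  have "x \<in> span (w ` I \<inter> w ` J)"
    by (rule span_Int_independent[OF independent_w]) (use assms in auto)
  moreover have "w ` I \<inter> w ` J = w ` (I \<inter> J)"
    using assms(1,2) inj_on_image_Int[OF inj_on_w] by simp
  ultimately show ?thesis by simp
qed

lemma Y_funpow_w: "i + k \<le> d \<Longrightarrow> (Y ^^ k) (w i) = w (i + k)"
  by (induction k) (auto simp: Y_w)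

lemma Y_funpow_w_eq_0:
  assumes "i \<le> d" and "d < i + k"
  shows "(Y ^^ k) (w i) = 0"
proof -
  have "(Y ^^ (Suc (d - i) + m)) (w i) = 0" for m
  proof (induction m)
    case 0 then show ?case using Y_funpow_w[of i "d - i"] assms by (simp add: Y_w_top)
  next
    case (Suc m) then show ?case using linear_endo_0[OF linear_Y] by simp
  qed
  from this[of "k - Suc (d - i)"] assms show ?thesis by simp
qed

lemma range_Y_funpow: "k \<le> d \<Longrightarrow> range (Y ^^ k) = span (w ` {k..d})"
proof -
  assume k: "k \<le> d"
  have "range (Y ^^ k) = span ((Y ^^ k) ` w ` {..d})"
    using linear_endo_image_span[OF linear_endo_funpow[OF linear_Y]] by (metis span_w)
  also have "\<dots> = span (w ` {k..d})"
  proof (unfold span_eq, intro conjI subsetI)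
    fix x assume "x \<in> (Y ^^ k) ` w ` {..d}"
    then obtain i where i: "i \<le> d" "x = (Y ^^ k) (w i)" by auto
    show "x \<in> span (w ` {k..d})"
    proof (cases "i + k \<le> d")
      case True then show ?thesis using i Y_funpow_w by (auto intro!: span_base)
    next
      case False then show ?thesis using Y_funpow_w_eq_0 i by (simp add: span_zero)
    qed
  next
    fix x assume "x \<in> w ` {k..d}"
    then obtain j where j: "k \<le> j" "j \<le> d" "x = w j" by auto
    then have "x = (Y ^^ k) (w (j - k))" using Y_funpow_w[of "j - k" k] by simp
    then show "x \<in> span ((Y ^^ k) ` w ` {..d})" using j by (intro span_base) auto
  qed
  finally show ?thesis .
qed

lemma flag_of_Y: "i \<le> d \<Longrightarrow> flag_of d Y i = span (w ` {d - i..d})"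
  using range_Y_funpow[of "d - i"] by (simp add: flag_of_def)

lemma Nil_Y: "is_Nil d Y"
  unfolding is_Nil_def
proof
  show "Y ^^ (d + 1) = (\<lambda>_. 0)"
  proof (rule linear_endo_eq_0_on_spanning[OF linear_endo_funpow[OF linear_Y] span_w])
    fix x assume "x \<in> w ` {..d}"
    then show "(Y ^^ (d + 1)) x = 0" using Y_funpow_w_eq_0[of _ "d + 1"] by auto
  qed
  have "(Y ^^ d) (w 0) \<noteq> 0" using Y_funpow_w[of 0 d] w_nonzero[of d] by simp
  then show "Y ^^ d \<noteq> (\<lambda>_. 0)" by auto
qed

lemma raises_initial_spans: "raises_flag d Y (\<lambda>i. span (w ` {..i}))"
  unfolding raises_flag_def
proof (intro allI impI)
  fix i assume "i < d"
  then have "Y ` w ` {..i} = w ` Suc ` {..i}" by (auto simp: Y_w image_image)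
  moreover have "{..i} \<union> Suc ` {..i} = {..Suc i}" by (auto simp: atMost_Suc)
  ultimately have "w ` {..i} \<union> Y ` w ` {..i} = w ` {..Suc i}" by (metis image_Un)
  then show "subspace_sum (span (w ` {..i})) (Y ` span (w ` {..i})) = span (w ` {..i + 1})"
    by (simp add: subspace_sum_span_image[OF linear_Y])
qed

text \<open>In the converse direction \<open>X\<close> is only known through its flag and through raising the
  flag of \<open>Y\<close>; the following lemmas show that this forces \<open>X\<close> to lower the basis \<open>w\<close>.\<close>

lemma raises_flag_Y_imp_span_final_segment_step:
  assumes "Vector_Spaces.linear scale scale X" and "raises_flag d X (flag_of d Y)"
    and "1 \<le> j" and "j \<le> d"
  shows "span (w ` {j..d} \<union> X ` w ` {j..d}) = span (w ` {j - 1..d})"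
proof -
  have "span (w ` {j..d} \<union> X ` w ` {j..d}) =
      subspace_sum (flag_of d Y (d - j)) (X ` flag_of d Y (d - j))"
    using assms(4) by (simp add: flag_of_Y subspace_sum_span_image[OF assms(1)])
  also have "\<dots> = flag_of d Y (d - j + 1)"
    using assms(2-4) unfolding raises_flag_def by simp
  finally show ?thesis using assms(3,4) by (simp add: flag_of_Y)
qed

lemma X_w_in_span_pred:
  assumes "Vector_Spaces.linear scale scale X" and "raises_flag d X (flag_of d Y)"
    and flag_X: "\<And>i. i \<le> d \<Longrightarrow> flag_of d X i = span (w ` {..i})"
    and "1 \<le> j" and "j \<le> d"
  shows "X (w j) \<in> span {w (j - 1)}"
proof -
  have "w j \<in> range (X ^^ (d - j))"
    using flag_X[of j] assms(5) by (auto simp: flag_of_def intro: span_base)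
  then have "X (w j) \<in> range (X ^^ (d - (j - 1)))"
    using assms(4,5) by (auto simp: Suc_diff_le)
  then have in_X: "X (w j) \<in> span (w ` {..j - 1})"
    using flag_X[of "j - 1"] assms(5) by (simp add: flag_of_def)
  have "X (w j) \<in> span (w ` {j..d} \<union> X ` w ` {j..d})"
    using assms(5) by (intro span_base) auto
  then have "X (w j) \<in> span (w ` {j - 1..d})"
    using raises_flag_Y_imp_span_final_segment_step[OF assms(1,2,4,5)] by simp
  then have "X (w j) \<in> span (w ` ({..j - 1} \<inter> {j - 1..d}))"
    by (intro span_w_Int[OF _ _ in_X]) (use assms(5) in auto)
  moreover have "{..j - 1} \<inter> {j - 1..d} = {j - 1}" using assms(5) by auto
  ultimately show ?thesis by simp
qed

lemma X_w_nonzero: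
  assumes "Vector_Spaces.linear scale scale X" and "raises_flag d X (flag_of d Y)"
    and lowers: "\<And>l. 1 \<le> l \<Longrightarrow> l \<le> d \<Longrightarrow> X (w l) \<in> span {w (l - 1)}"
    and "1 \<le> j" and "j \<le> d"
  shows "X (w j) \<noteq> 0"
proof
  assume X0: "X (w j) = 0"
  let ?A = "w ` {j..d}"
  have "?A \<union> X ` ?A \<subseteq> span ?A"
  proof (intro Un_least subsetI)
    fix x assume "x \<in> X ` ?A"
    then obtain l where l: "j \<le> l" "l \<le> d" "x = X (w l)" by auto
    show "x \<in> span ?A"
    proof (cases "l = j")
      case True then show ?thesis using X0 l by (simp add: span_zero)
    next
      case False
      then have "l - 1 \<in> {j..d}" using l by auto
      then have "span {w (l - 1)} \<subseteq> span ?A" by (intro span_mono) auto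
      then show ?thesis using lowers[of l] l assms(4) by auto
    qed
  qed (rule span_base)
  then have "span (?A \<union> X ` ?A) \<subseteq> span ?A" by (intro span_minimal) auto
  moreover have "span (?A \<union> X ` ?A) = span (w ` {j - 1..d})"
    by (rule raises_flag_Y_imp_span_final_segment_step) fact+
  moreover have "w (j - 1) \<in> span (w ` {j - 1..d})" using assms(5) by (auto intro: span_base)
  moreover have "w (j - 1) \<notin> span ?A" by (rule w_notin_span) (use assms(4,5) in auto)
  ultimately show False by blast
qed

end

locale lowering_raising_basis = raising_basis +
  fixes X :: "'b \<Rightarrow> 'b"
  assumes linear_X: "Vector_Spaces.linear scale scale X"
    and X_w_bot: "X (w 0) = 0"
    and X_w: "1 \<le> i \<Longrightarrow> i \<le> d \<Longrightarrow> \<exists>a. a \<noteq> 0 \<and> X (w i) = a *s w (i - 1)"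
begin

lemma X_funpow_w: "i \<le> d \<Longrightarrow> k \<le> i \<Longrightarrow> \<exists>a. a \<noteq> 0 \<and> (X ^^ k) (w i) = a *s w (i - k)"
proof (induction k)
  case 0 then show ?case by (intro exI[of _ 1]) simp
next
  case (Suc k)
  then obtain a where a: "a \<noteq> 0" "(X ^^ k) (w i) = a *s w (i - k)" by auto
  have "1 \<le> i - k" "i - k \<le> d" using Suc.prems by auto
  then obtain b where b: "b \<noteq> 0" "X (w (i - k)) = b *s w (i - k - 1)" using X_w by blast
  have "(X ^^ Suc k) (w i) = (a * b) *s w (i - Suc k)"
    using a b by (simp add: linear_endo_scale[OF linear_X])
  then show ?case using a b by (intro exI[of _ "a * b"]) simp
qed

lemma X_funpow_w_eq_0:
  assumes "i \<le> d" and "i < k"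
  shows "(X ^^ k) (w i) = 0"
proof -
  have "(X ^^ (Suc i + m)) (w i) = 0" for m
  proof (induction m)
    case 0
    obtain a where "(X ^^ i) (w i) = a *s w 0" using X_funpow_w[OF assms(1), of i] by auto
    then show ?case by (simp add: linear_endo_scale[OF linear_X] X_w_bot)
  next
    case (Suc m) then show ?case using linear_endo_0[OF linear_X] by simp
  qed
  from this[of "k - Suc i"] assms show ?thesis by simp
qed

lemma range_X_funpow: "k \<le> d \<Longrightarrow> range (X ^^ k) = span (w ` {..d - k})"
proof -
  assume k: "k \<le> d"
  have "range (X ^^ k) = span ((X ^^ k) ` w ` {..d})"
    using linear_endo_image_span[OF linear_endo_funpow[OF linear_X]] by (metis span_w)
  also have "\<dots> = span (w ` {..d - k})"
  proof (unfold span_eq, intro conjI subsetI)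
    fix x assume "x \<in> (X ^^ k) ` w ` {..d}"
    then obtain i where i: "i \<le> d" "x = (X ^^ k) (w i)" by auto
    show "x \<in> span (w ` {..d - k})"
    proof (cases "k \<le> i")
      case True
      then obtain a where "x = a *s w (i - k)" using X_funpow_w i by blast
      moreover have "w (i - k) \<in> span (w ` {..d - k})" using i by (intro span_base) auto
      ultimately show ?thesis by (simp add: span_scale)
    next
      case False then show ?thesis using X_funpow_w_eq_0 i by (simp add: span_zero)
    qed
  next
    fix x assume "x \<in> w ` {..d - k}"
    then obtain j where j: "j \<le> d - k" "x = w j" by auto
    have "j + k \<le> d" using j k by simp
    then obtain a where a: "a \<noteq> 0" "(X ^^ k) (w (j + k)) = a *s w j"
      using X_funpow_w[of "j + k" k] by auto
    have "x = inverse a *s (X ^^ k) (w (j + k))" using a j by simp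
    moreover have "(X ^^ k) (w (j + k)) \<in> span ((X ^^ k) ` w ` {..d})"
      using j k by (intro span_base) auto
    ultimately show "x \<in> span ((X ^^ k) ` w ` {..d})" by (simp add: span_scale)
  qed
  finally show ?thesis .
qed

lemma flag_of_X: "i \<le> d \<Longrightarrow> flag_of d X i = span (w ` {..i})"
  using range_X_funpow[of "d - i"] by (simp add: flag_of_def)

lemma Nil_X: "is_Nil d X"
  unfolding is_Nil_def
proof
  show "X ^^ (d + 1) = (\<lambda>_. 0)"
  proof (rule linear_endo_eq_0_on_spanning[OF linear_endo_funpow[OF linear_X] span_w])
    fix x assume "x \<in> w ` {..d}"
    then show "(X ^^ (d + 1)) x = 0" using X_funpow_w_eq_0[of _ "d + 1"] by auto
  qed
  obtain a where "a \<noteq> 0" "(X ^^ d) (w d) = a *s w 0" using X_funpow_w[of d d] by auto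
  then have "(X ^^ d) (w d) \<noteq> 0" using w_nonzero[of 0] by simp
  then show "X ^^ d \<noteq> (\<lambda>_. 0)" by auto
qed

lemma raises_Y_flag_X: "raises_flag d Y (flag_of d X)"
  using raises_initial_spans raises_flag_cong[of d "flag_of d X" "\<lambda>i. span (w ` {..i})" Y]
  by (simp add: flag_of_X)

lemma span_final_segment_step:
  assumes "1 \<le> j" and "j \<le> d"
  shows "span (w ` {j..d} \<union> X ` w ` {j..d}) = span (w ` {j - 1..d})"
proof (unfold span_eq, intro conjI subsetI)
  fix x assume "x \<in> w ` {j..d} \<union> X ` w ` {j..d}"
  then show "x \<in> span (w ` {j - 1..d})"
  proof
    assume "x \<in> w ` {j..d}"
    moreover have "w ` {j..d} \<subseteq> w ` {j - 1..d}" by (intro image_mono) auto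
    ultimately show ?thesis by (blast intro: span_base)
  next
    assume "x \<in> X ` w ` {j..d}"
    then obtain l where l: "j \<le> l" "l \<le> d" "x = X (w l)" by auto
    then obtain a where "x = a *s w (l - 1)" using X_w[of l] assms(1) by auto
    moreover have "l - 1 \<in> {j - 1..d}" using l by auto
    then have "w (l - 1) \<in> span (w ` {j - 1..d})" by (intro span_base imageI)
    ultimately show ?thesis by (simp add: span_scale)
  qed
next
  fix x assume "x \<in> w ` {j - 1..d}"
  then obtain l where l: "j - 1 \<le> l" "l \<le> d" "x = w l" by auto
  show "x \<in> span (w ` {j..d} \<union> X ` w ` {j..d})"
  proof (cases "j \<le> l")
    case True then show ?thesis using l by (auto intro: span_base)
  next
    case False
    then have "l = j - 1" using l by simp
    then have "x = w (j - 1)" using l by simp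
    moreover obtain a where "a \<noteq> 0" "X (w j) = a *s w (j - 1)" using X_w assms by blast
    ultimately have "x = inverse a *s X (w j)" by simp
    moreover have "X (w j) \<in> span (w ` {j..d} \<union> X ` w ` {j..d})"
      using assms(2) by (intro span_base) auto
    ultimately show ?thesis by (simp add: span_scale)
  qed
qed

lemma raises_X_flag_Y: "raises_flag d X (flag_of d Y)"
  unfolding raises_flag_def
proof (intro allI impI)
  fix i assume "i < d"
  then show "subspace_sum (flag_of d Y i) (X ` flag_of d Y i) = flag_of d Y (i + 1)"
    using span_final_segment_step[of "d - i"]
    by (simp add: flag_of_Y subspace_sum_span_image[OF linear_X])
qed

lemma LR_pair_X_Y: "LR_pair scale d X Y"
  unfolding LR_pair_def
proof (intro exI conjI)
  let ?W = "\<lambda>i. span {w i}"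
  show "is_decomposition scale d ?W"
    unfolding is_decomposition_def
  proof (intro conjI allI impI)
    fix i assume i: "i \<le> d"
    show "subspace (span {w i})" by simp
    show "dim (span {w i}) = 1" using w_nonzero[OF i] by simp
    have "span (\<Union>j\<in>{..d} - {i}. span {w j}) = span (w ` ({..d} - {i}))"
      by (simp add: span_UN_span_singleton)
    moreover have "x = 0" if "x \<in> span {w i}" and "x \<in> span (w ` ({..d} - {i}))" for x
    proof (rule ccontr)
      assume "x \<noteq> 0"
      obtain a where "x = a *s w i" using \<open>x \<in> span {w i}\<close> by (auto simp: span_singleton)
      with \<open>x \<noteq> 0\<close> have "w i = inverse a *s x" by auto
      then have "w i \<in> span (w ` ({..d} - {i}))" using that(2) by (simp add: span_scale)
      then show False using w_notin_span[OF i, of "{..d} - {i}"] by auto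
    qed
    ultimately show "span {w i} \<inter> span (\<Union>j\<in>{..d} - {i}. span {w j}) = {0}"
      by (auto simp: span_zero)
  next
    have "span (\<Union>i\<le>d. span {w i}) = span (w ` {..d})"
      by (simp add: span_UN_span_singleton)
    then show "span (\<Union>i\<le>d. span {w i}) = UNIV" using span_w by simp
  qed
  show "lowers_dec d X ?W"
    unfolding lowers_dec_def
  proof (intro conjI allI impI)
    fix i assume i: "1 \<le> i \<and> i \<le> d"
    then obtain a where "a \<noteq> 0" "X (w i) = a *s w (i - 1)" using X_w by blast
    then show "X ` span {w i} = span {w (i - 1)}"
      using span_image_scale[of "{w (i - 1)}" "\<lambda>_. a"]
      by (simp add: linear_endo_image_span[OF linear_X])
  qed (simp add: linear_endo_image_span[OF linear_X] X_w_bot)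
  show "raises_dec d Y ?W"
    unfolding raises_dec_def by (simp add: linear_endo_image_span[OF linear_Y] Y_w Y_w_top)
qed

end

context finite_dimensional_vector_space begin

lemma LR_pair_obtains_lowering_raising_basis:
  assumes linear_X: "Vector_Spaces.linear scale scale X"
    and linear_Y: "Vector_Spaces.linear scale scale Y"
    and dim_UNIV: "dim (UNIV :: 'b set) = d + 1" and "LR_pair scale d X Y"
  obtains w where "lowering_raising_basis scale Basis d Y w X"
proof -
  obtain W where dec: "is_decomposition scale d W"
    and low: "lowers_dec d X W" and rai: "raises_dec d Y W"
    using \<open>LR_pair scale d X Y\<close> unfolding LR_pair_def by blast
  have "subspace (W 0)" and "dim (W 0) = 1" using dec unfolding is_decomposition_def by auto
  then obtain b where W_0: "W 0 = span {b}" using dim_one_subspace_eq_span_singleton by blast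
  define w where "w i = (Y ^^ i) b" for i
  have W_w: "W i = span {w i}" if "i \<le> d" for i
    using raised_decomposition_eq_span_iterates[OF linear_Y rai W_0 that] by (simp add: w_def)
  have w_nonzero: "w i \<noteq> 0" if "i \<le> d" for i
  proof
    assume "w i = 0"
    then have "W i = {0}" using W_w[OF that] by simp
    then show False using dec that unfolding is_decomposition_def by auto
  qed
  have "span (w ` {..d}) = span (\<Union>i\<le>d. W i)"
    using W_w by (simp add: span_UN_span_singleton)
  then have span_w: "span (w ` {..d}) = UNIV" using dec unfolding is_decomposition_def by simp
  have "Y (w d) \<in> Y ` W d" and "X (w 0) \<in> X ` W 0"
    using W_w[of d] W_w[of 0] by (auto intro: span_base)
  then have Y_w_top: "Y (w d) = 0" and X_w_bot: "X (w 0) = 0"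
    using rai low unfolding raises_dec_def lowers_dec_def by auto
  have X_w: "\<exists>a. a \<noteq> 0 \<and> X (w i) = a *s w (i - 1)" if "1 \<le> i" "i \<le> d" for i
  proof (rule span_singleton_eq_imp_scale)
    have "span {X (w i)} = X ` W i"
      using W_w[of i] that by (simp add: linear_endo_image_span[OF linear_X])
    also have "\<dots> = W (i - 1)" using low that unfolding lowers_dec_def by blast
    finally show "span {X (w i)} = span {w (i - 1)}" using W_w[of "i - 1"] that by simp
  qed (use w_nonzero that in simp)
  have "lowering_raising_basis scale Basis d Y w X"
    by (intro lowering_raising_basis.intro raising_basis.intro lowering_raising_basis_axioms.intro
        raising_basis_axioms.intro finite_dimensional_vector_space_axioms)
      (use linear_X linear_Y dim_UNIV span_w Y_w_top X_w_bot X_w in \<open>auto simp: w_def\<close>)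
  then show ?thesis by (rule that)
qed

lemma Nil_raising_obtains_lowering_raising_basis:
  assumes linear_X: "Vector_Spaces.linear scale scale X"
    and linear_Y: "Vector_Spaces.linear scale scale Y"
    and dim_UNIV: "dim (UNIV :: 'b set) = d + 1"
    and Nil_X: "is_Nil d X" and Nil_Y: "is_Nil d Y"
    and raises_Y: "raises_flag d Y (flag_of d X)" and raises_X: "raises_flag d X (flag_of d Y)"
  obtains w where "lowering_raising_basis scale Basis d Y w X"
proof -
  obtain u where "u \<noteq> 0" and top: "range (X ^^ d) = span {u}"
    using Nil_range_top_eq_span_singleton[OF linear_X Nil_X dim_UNIV] .
  define w where "w i = (Y ^^ i) u" for i
  have flag_X: "flag_of d X i = span (w ` {..i})" if "i \<le> d" for i
    using raised_flag_eq_span_iterates[OF linear_Y raises_Y _ that] top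
    by (simp add: flag_of_def w_def)
  have span_w: "span (w ` {..d}) = UNIV" using flag_X[of d] by (simp add: flag_of_def)
  have Y_w_top: "Y (w d) = 0"
    using fun_cong[OF Nil_Y[unfolded is_Nil_def, THEN conjunct1], of u] by (simp add: w_def)
  interpret raising_basis scale Basis d Y w
    by (intro raising_basis.intro raising_basis_axioms.intro finite_dimensional_vector_space_axioms)
      (use linear_Y dim_UNIV span_w Y_w_top in \<open>auto simp: w_def\<close>)
  have "u \<in> range (X ^^ d)" using top by (simp add: span_base)
  then obtain v where "u = (X ^^ d) v" by auto
  then have X_w_bot: "X (w 0) = 0"
    using fun_cong[OF Nil_X[unfolded is_Nil_def, THEN conjunct1], of v] by (simp add: w_def)
  have X_w: "\<exists>a. a \<noteq> 0 \<and> X (w j) = a *s w (j - 1)" if j: "1 \<le> j" "j \<le> d" for j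
  proof -
    have lowers: "X (w l) \<in> span {w (l - 1)}" if "1 \<le> l" "l \<le> d" for l
      using X_w_in_span_pred[OF linear_X raises_X flag_X that] .
    obtain a where "X (w j) = a *s w (j - 1)" using lowers[OF j] by (auto simp: span_singleton)
    with X_w_nonzero[OF linear_X raises_X lowers j] show ?thesis by auto
  qed
  have "lowering_raising_basis scale Basis d Y w X"
    by (intro lowering_raising_basis.intro lowering_raising_basis_axioms.intro
        raising_basis_axioms) (use linear_X X_w_bot X_w in auto)
  then show ?thesis by (rule that)
qed

lemma LR_pair_iff_Nil_raising:
  assumes "Vector_Spaces.linear scale scale X" and "Vector_Spaces.linear scale scale Y"
    and "dim (UNIV :: 'b set) = d + 1"
  shows "LR_pair scale d X Y \<longleftrightarrow> is_Nil d X \<and> is_Nil d Y \<and>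
    raises_flag d Y (flag_of d X) \<and> raises_flag d X (flag_of d Y)"
proof
  assume "LR_pair scale d X Y"
  then obtain w where "lowering_raising_basis scale Basis d Y w X"
    using LR_pair_obtains_lowering_raising_basis[OF assms] by blast
  then interpret lowering_raising_basis scale Basis d Y w X .
  show "is_Nil d X \<and> is_Nil d Y \<and> raises_flag d Y (flag_of d X) \<and> raises_flag d X (flag_of d Y)"
    using Nil_X Nil_Y raises_Y_flag_X raises_X_flag_Y by blast
next
  assume "is_Nil d X \<and> is_Nil d Y \<and> raises_flag d Y (flag_of d X) \<and> raises_flag d X (flag_of d Y)"
  then obtain w where "lowering_raising_basis scale Basis d Y w X"
    using Nil_raising_obtains_lowering_raising_basis[OF assms] by blast
  then interpret lowering_raising_basis scale Basis d Y w X .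
  show "LR_pair scale d X Y" by (rule LR_pair_X_Y)
qed

end

theorem theorem34p3:
  fixes scale :: "'f::field \<Rightarrow> 'v::ab_group_add \<Rightarrow> 'v"
    and d :: nat and A B C :: "'v \<Rightarrow> 'v"
  assumes "vector_space scale"
    and "vector_space.dim scale (UNIV :: 'v set) = d + 1"
    and "Vector_Spaces.linear scale scale A"
    and "Vector_Spaces.linear scale scale B"
    and "Vector_Spaces.linear scale scale C"
  shows "LR_triple scale d A B C \<longleftrightarrow>
    (is_Nil d A \<and> is_Nil d B \<and> is_Nil d C) \<and>
    (raises_flag d B (flag_of d A) \<and> raises_flag d C (flag_of d A)) \<and>
    (raises_flag d C (flag_of d B) \<and> raises_flag d A (flag_of d B)) \<and>
    (raises_flag d A (flag_of d C) \<and> raises_flag d B (flag_of d C))"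
proof -
  interpret vector_space scale by fact
  obtain Basis where "independent Basis" and "span Basis = UNIV" and "card Basis = d + 1"
    using basis_exists[of UNIV] assms(2) by (metis UNIV_I subsetI subset_antisym span_superset)
  moreover from this have "finite Basis" by (metis card.infinite nat.simps(3) Suc_eq_plus1)
  ultimately interpret finite_dimensional_vector_space scale Basis
    by unfold_locales
  note pair = LR_pair_iff_Nil_raising[OF _ _ assms(2)]
  show ?thesis
    unfolding LR_triple_def
    using pair[OF assms(3,4)] pair[OF assms(4,3)] pair[OF assms(4,5)]
      pair[OF assms(5,4)] pair[OF assms(3,5)] pair[OF assms(5,3)]
    by blast
qed

end
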